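(* Let $d=2$, let $\widetilde{\mathcal{A}}$ be a measurable subset of $\mathbb{R}^+$ and $\mathcal{A}=\{x\in\mathbb{R}^2:|x|\in\widetilde{\mathcal{A}}\}$. Then there is an absolute constant $C$ such that for all $x\in\mathbb{R}^2$, $$M_{[1,2]}\chi_{\mathcal{A}}(x)\le C\Big([U\chi_{\widetilde{\mathcal{A}}}(|x|)]^{1/2}+[R\chi_{\widetilde{\mathcal{A}}}(|x|)]^{1/2}\Big),$$ where, for functions $f$ on $\mathbb{R}^+$, $$Uf(r)=\chi_{(1/2,\infty)}(r)\sup_{t\in[1,2],\ t<2r}\frac1r\int_{|r-t|}^{r+t}zf(z)\,dz,\qquad Rf(r)=\chi_{[0,1]}(r)\sup_{t\in[1,2],\ t\ge2r}\frac1r\int_{t-r}^{t+r}f(z)\,dz.$$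
   Context: $M_{[1,2]}f(x)=\sup_{t\in[1,2]}\left|\int_{\mathbb{S}^1}f(x-ty)\,d\sigma(y)\right|$ with $\sigma$ the normalized arc-length measure on $\mathbb{S}^1$; $\chi_S$ is the indicator function of $S$. *)

theory Defs
  imports "HOL-Analysis.Analysis"
begin

text \<open>R^2 is modelled as real \<times> real (Euclidean norm). The normalized arc-length
 measure on S^1 is written via the parametrization theta \<mapsto> (cos theta, sin theta).\<close>

definition circle_avg :: "(real \<times> real \<Rightarrow> real) \<Rightarrow> real \<times> real \<Rightarrow> real \<Rightarrow> real" where
  "circle_avg f x t =
     (1 / (2 * pi)) * (LINT \<theta>:{0..2*pi}|lebesgue. f (x - t *\<^sub>R (cos \<theta>, sin \<theta>)))"

definition M12 :: "(real \<times> real \<Rightarrow> real) \<Rightarrow> real \<times> real \<Rightarrow> real" where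
  "M12 f x = (SUP t\<in>{1..2}. \<bar>circle_avg f x t\<bar>)"

definition opU :: "(real \<Rightarrow> real) \<Rightarrow> real \<Rightarrow> real" where
  "opU f r = indicator {1/2<..} r *
     (SUP t\<in>{t. 1 \<le> t \<and> t \<le> 2 \<and> t < 2 * r}.
        (1 / r) * (LINT z:{\<bar>r - t\<bar>..r + t}|lebesgue. z * f z))"

definition opR :: "(real \<Rightarrow> real) \<Rightarrow> real \<Rightarrow> real" where
  "opR f r = indicator {0..1} r *
     (SUP t\<in>{t. 1 \<le> t \<and> t \<le> 2 \<and> 2 * r \<le> t}.
        (1 / r) * (LINT z:{t - r..t + r}|lebesgue. f z))"

end

theory Submission
  imports Defs
begin

text \<open>Write \<open>r = |x|\<close> and \<open>x = -r (cos \<psi>, sin \<psi>)\<close>. Then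
  \<open>|x - t (cos \<theta>, sin \<theta>)|\<^sup>2 = r\<^sup>2 + t\<^sup>2 + 2 r t cos (\<theta> - \<psi>)\<close>, so the map
  \<open>\<theta> \<mapsto> |x - t (cos \<theta>, sin \<theta>)|\<^sup>2 / 2\<close> sends the set \<open>S\<close> of angles with
  \<open>|x - t (cos \<theta>, sin \<theta>)| \<in> A\<close> into the image \<open>B\<close> of \<open>A \<inter> [|r - t|, r + t]\<close> under \<open>z \<mapsto> z\<^sup>2/2\<close>, and \<open>|B|\<close> is
  the integral of \<open>z \<chi>\<^sub>A(z)\<close> over that interval. Outside the set \<open>|sin (\<theta> - \<psi>)| < \<delta>\<close>, of
  measure \<open>O(\<delta>)\<close>, the map is injective on each half-period with derivative at least \<open>r t \<delta>\<close>,
  so \<open>|S| \<lesssim> \<delta> + |B| / (r t \<delta>)\<close>; optimising in \<open>\<delta>\<close> gives \<open>|S| \<lesssim> (|B| / r)\<^sup>1\<^sup>/\<^sup>2\<close> for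
  \<open>t \<ge> 1\<close>. This is the bound by \<open>U\<close> when \<open>t < 2r\<close>; when \<open>t \<ge> 2r\<close> the weight \<open>z \<le> t + r\<close> is
  bounded, which gives the bound by \<open>R\<close>.\<close>

lemma half_le_sin:
  fixes v :: real
  assumes "0 \<le> v" "v \<le> pi/3"
  shows "v/2 \<le> sin v"
proof -
  have "sin 0 - 0/2 \<le> sin v - v/2"
  proof (rule DERIV_nonneg_imp_nondecreasing[of 0 v "\<lambda>v. sin v - v/2"])
    fix y assume y: "0 \<le> y" "y \<le> v"
    have "cos (pi/3) \<le> cos y"
      using y assms by (intro cos_monotone_0_pi_le) auto
    then show "\<exists>y'. ((\<lambda>v. sin v - v/2) has_real_derivative y') (at y) \<and> 0 \<le> y'"
      by (intro exI[of _ "cos y - 1/2"]) (auto intro!: derivative_eq_intros simp: cos_60)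
  qed (use assms in auto)
  then show ?thesis by simp
qed

lemma abs_sin_diff_int_mult_pi: "\<bar>sin (u - of_int k * pi)\<bar> = \<bar>sin u\<bar>"
  by (simp add: sin_diff mult.commute[of _ pi] abs_mult)

lemma cos_add_int_mult_pi: "cos (of_int k * pi + v) = cos (of_int k * pi) * cos v"
  by (simp add: cos_add mult.commute[of _ pi])

lemma inj_on_cos_int_mult_pi: "inj_on cos {of_int k * pi .. of_int k * pi + pi}"
proof (rule inj_onI)
  fix a b assume ab: "a \<in> {of_int k * pi .. of_int k * pi + pi}" "b \<in> {of_int k * pi .. of_int k * pi + pi}"
    and "cos a = cos b"
  moreover have "cos (of_int k * pi) \<noteq> 0"
    by (simp add: mult.commute[of _ pi])
  ultimately have "cos (a - of_int k * pi) = cos (b - of_int k * pi)"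
    using cos_add_int_mult_pi[of k "a - of_int k * pi"] cos_add_int_mult_pi[of k "b - of_int k * pi"]
    by simp
  moreover have "0 \<le> a - of_int k * pi" "a - of_int k * pi \<le> pi"
    "0 \<le> b - of_int k * pi" "b - of_int k * pi \<le> pi"
    using ab by auto
  ultimately have "a - of_int k * pi = b - of_int k * pi"
    using cos_inj_pi by blast
  then show "a = b" by simp
qed

lemma abs_sin_less_imp_near_int_mult_pi:
  fixes u \<delta> :: real
  assumes "\<bar>sin u\<bar> < \<delta>" "\<delta> \<le> 1/2"
  shows "\<exists>k::int. \<bar>u - of_int k * pi\<bar> < 2*\<delta>"
proof -
  define k where "k = \<lfloor>u/pi + 1/2\<rfloor>"
  define v where "v = u - of_int k * pi"
  have "of_int k \<le> u/pi + 1/2" "u/pi + 1/2 < of_int k + 1"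
    unfolding k_def by linarith+
  then have "-pi/2 \<le> v" "v \<le> pi/2"
    unfolding v_def using pi_gt_zero by (auto simp: field_simps)
  then have v: "\<bar>v\<bar> \<le> pi/2" by linarith
  have "sin \<bar>v\<bar> = \<bar>sin v\<bar>"
    using v sin_ge_zero[of v] sin_ge_zero[of "-v"] by (cases "0 \<le> v") auto
  then have sin_v: "sin \<bar>v\<bar> < \<delta>"
    using assms(1) abs_sin_diff_int_mult_pi[of u k] by (simp add: v_def)
  have "\<bar>v\<bar> < 2*\<delta>"
  proof (cases "\<bar>v\<bar> \<le> pi/3")
    case True
    then show ?thesis using half_le_sin[of "\<bar>v\<bar>"] sin_v by linarith
  next
    case False
    then have "sin (pi/3) \<le> sin \<bar>v\<bar>"
      using v by (intro sin_monotone_2pi_le) auto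
    then have "sqrt 3 / 2 < \<delta>" using sin_v by (simp add: sin_60)
    moreover have "1 \<le> sqrt 3" by simp
    ultimately show ?thesis using assms(2) by linarith
  qed
  then show ?thesis unfolding v_def by blast
qed

lemma abs_sin_less_in_sets:
  "{\<theta>\<in>{0..2*pi}. \<bar>sin (\<theta> - \<psi>)\<bar> < \<delta>} \<in> sets lebesgue"
proof -
  have "open {\<theta>::real. \<bar>sin (\<theta> - \<psi>)\<bar> < \<delta>}"
    by (intro open_Collect_less continuous_intros)
  then have "{0..2*pi} \<inter> {\<theta>. \<bar>sin (\<theta> - \<psi>)\<bar> < \<delta>} \<in> sets lebesgue"
    by (simp add: borel_open)
  moreover have "{\<theta>\<in>{0..2*pi}. \<bar>sin (\<theta> - \<psi>)\<bar> < \<delta>} = {0..2*pi} \<inter> {\<theta>. \<bar>sin (\<theta> - \<psi>)\<bar> < \<delta>}"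
    by auto
  ultimately show ?thesis by simp
qed

lemma measure_abs_sin_less_le:
  fixes \<psi> \<delta> :: real
  assumes "0 \<le> \<psi>" "\<psi> < 2*pi" "0 < \<delta>"
  shows "measure lebesgue {\<theta>\<in>{0..2*pi}. \<bar>sin (\<theta> - \<psi>)\<bar> < \<delta>} \<le> 20*\<delta>"
proof -
  let ?T = "{\<theta>\<in>{0..2*pi}. \<bar>sin (\<theta> - \<psi>)\<bar> < \<delta>}"
  have T_sets: "?T \<in> sets lebesgue"
    by (rule abs_sin_less_in_sets)
  show ?thesis
  proof (cases "\<delta> \<le> 1/2")
    case False
    have "measure lebesgue ?T \<le> measure lebesgue {0..2*pi}"
      by (intro measure_mono_fmeasurable T_sets) auto
    also have "\<dots> = 2*pi" by simp
    finally show ?thesis using False pi_less_4 by linarith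
  next
    case True
    let ?I = "\<lambda>k::int. {\<psi> + of_int k * pi - 2*\<delta> .. \<psi> + of_int k * pi + 2*\<delta>}"
    have cover: "?T \<subseteq> (\<Union>k\<in>{-2..2}. ?I k)"
    proof
      fix \<theta> assume \<theta>: "\<theta> \<in> ?T"
      then obtain k::int where k: "\<bar>\<theta> - \<psi> - of_int k * pi\<bar> < 2*\<delta>"
        using abs_sin_less_imp_near_int_mult_pi[of "\<theta> - \<psi>" \<delta>] True by auto
      have "of_int k * pi < 2*pi + 1" "-2*pi - 1 < of_int k * pi"
        using k \<theta> assms True by auto
      then have "of_int k * pi < 3 * pi" "-3 * pi < of_int k * pi"
        using pi_gt3 by linarith+
      then have "of_int k * pi < of_int 3 * pi" "of_int (-3) * pi < of_int k * pi"
        by simp_all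
      then have "of_int k < (of_int 3::real)" "of_int (-3) < (of_int k::real)"
        using pi_gt_zero mult_less_cancel_right_pos by blast+
      then have "k \<in> {-2..2}" by simp
      moreover have "\<theta> \<in> ?I k" using k by auto
      ultimately show "\<theta> \<in> (\<Union>k\<in>{-2..2}. ?I k)" by blast
    qed
    have "measure lebesgue ?T \<le> measure lebesgue (\<Union>k\<in>{-2..2}. ?I k)"
      by (intro measure_mono_fmeasurable T_sets cover) (auto intro!: fmeasurable.finite_UN)
    also have "\<dots> \<le> (\<Sum>k\<in>{-2..2::int}. measure lebesgue (?I k))"
      by (intro measure_UNION_le) auto
    also have "\<dots> = (\<Sum>k\<in>{-2..2::int}. 4*\<delta>)"
      using assms by (intro sum.cong) auto
    also have "\<dots> = 20*\<delta>" by simp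
    finally show ?thesis .
  qed
qed

lemma measure_image_eq_integral_abs_deriv:
  fixes g g' :: "real \<Rightarrow> real"
  assumes S: "S \<in> sets lebesgue"
    and der: "\<And>x. x \<in> S \<Longrightarrow> (g has_field_derivative g' x) (at x within S)"
    and inj: "inj_on g S"
    and int: "(\<lambda>x. \<bar>g' x\<bar>) absolutely_integrable_on S"
  shows "g ` S \<in> lmeasurable" and "measure lebesgue (g ` S) = integral S (\<lambda>x. \<bar>g' x\<bar>)"
proof -
  have "(\<lambda>_. 1::real) absolutely_integrable_on g ` S \<and>
      integral (g ` S) (\<lambda>_. 1::real) = integral S (\<lambda>x. \<bar>g' x\<bar>)"
    using has_absolute_integral_change_of_variables_1'[OF S der inj, of "\<lambda>_. 1" "integral S (\<lambda>x. \<bar>g' x\<bar>)"] int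
    by simp
  then show "g ` S \<in> lmeasurable" and "measure lebesgue (g ` S) = integral S (\<lambda>x. \<bar>g' x\<bar>)"
    using lmeasurable_iff_integrable_on lmeasure_integral set_lebesgue_integral_eq_integral(1)
    by metis+
qed

lemma measure_le_measure_image_if_abs_deriv_ge:
  fixes g g' :: "real \<Rightarrow> real"
  assumes S: "S \<in> lmeasurable"
    and der: "\<And>x. x \<in> S \<Longrightarrow> (g has_field_derivative g' x) (at x within S)"
    and inj: "inj_on g S"
    and int: "(\<lambda>x. \<bar>g' x\<bar>) absolutely_integrable_on S"
    and ge: "\<And>x. x \<in> S \<Longrightarrow> c \<le> \<bar>g' x\<bar>"
  shows "c * measure lebesgue S \<le> measure lebesgue (g ` S)"
proof -
  have "c * measure lebesgue S = integral S (\<lambda>_. c)"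
    using lmeasure_integral[OF S] integral_mult_right[of S c "\<lambda>_. 1::real"] by simp
  also have "\<dots> \<le> integral S (\<lambda>x. \<bar>g' x\<bar>)"
    using S int ge set_lebesgue_integral_eq_integral(1)
    by (intro integral_le) (auto intro: integrable_on_const)
  also have "\<dots> = measure lebesgue (g ` S)"
    using measure_image_eq_integral_abs_deriv(2)[OF fmeasurableD[OF S] der inj int] by simp
  finally show ?thesis .
qed

lemma measure_le_measure_image_shifted_cos:
  fixes c e \<psi> \<delta> :: real and k :: int
  assumes c: "0 < c" and S: "S \<in> sets lebesgue"
    and S_sub: "S \<subseteq> {\<psi> + of_int k * pi .. \<psi> + of_int k * pi + pi}"
    and sin_ge: "\<And>\<theta>. \<theta> \<in> S \<Longrightarrow> \<delta> \<le> \<bar>sin (\<theta> - \<psi>)\<bar>"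
    and img: "(\<lambda>\<theta>. e + c * cos (\<theta> - \<psi>)) ` S \<subseteq> B" and B: "B \<in> lmeasurable"
  shows "c * \<delta> * measure lebesgue S \<le> measure lebesgue B"
proof -
  define g where "g = (\<lambda>\<theta>. e + c * cos (\<theta> - \<psi>))"
  define g' where "g' = (\<lambda>\<theta>. - (c * sin (\<theta> - \<psi>)))"
  let ?I = "{\<psi> + of_int k * pi .. \<psi> + of_int k * pi + pi}"
  have S_lmeas: "S \<in> lmeasurable"
    by (rule fmeasurableI2[of ?I, OF _ S_sub S]) simp
  have der: "(g has_field_derivative g' \<theta>) (at \<theta> within S)" for \<theta>
    unfolding g_def g'_def by (auto intro!: derivative_eq_intros)
  have inj: "inj_on g S"
  proof (rule inj_onI)
    fix a b assume ab: "a \<in> S" "b \<in> S" and "g a = g b"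
    then have "cos (a - \<psi>) = cos (b - \<psi>)"
      using c by (simp add: g_def)
    moreover have "a - \<psi> \<in> {of_int k * pi .. of_int k * pi + pi}" "b - \<psi> \<in> {of_int k * pi .. of_int k * pi + pi}"
      using ab S_sub by fastforce+
    ultimately have "a - \<psi> = b - \<psi>"
      by (rule inj_onD[OF inj_on_cos_int_mult_pi])
    then show "a = b" by simp
  qed
  have "(\<lambda>\<theta>. \<bar>g' \<theta>\<bar>) absolutely_integrable_on ?I"
    unfolding g'_def by (intro absolutely_integrable_continuous_real continuous_intros)
  then have int: "(\<lambda>\<theta>. \<bar>g' \<theta>\<bar>) absolutely_integrable_on S"
    by (rule set_integrable_subset[OF _ S S_sub])
  have "c * \<delta> \<le> \<bar>g' \<theta>\<bar>" if "\<theta> \<in> S" for \<theta>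
    using sin_ge[OF that] c by (simp add: g'_def abs_mult)
  then have "c * \<delta> * measure lebesgue S \<le> measure lebesgue (g ` S)"
    by (rule measure_le_measure_image_if_abs_deriv_ge[OF S_lmeas der inj int])
  also have "\<dots> \<le> measure lebesgue B"
    using img[folded g_def] measure_image_eq_integral_abs_deriv(1)[OF S der inj int]
    by (intro measure_mono_fmeasurable[OF _ _ B]) auto
  finally show ?thesis .
qed

lemma le_sqrt_if_le_linear_plus_inverse:
  fixes s a b q :: real
  assumes le: "\<And>\<delta>. 0 < \<delta> \<Longrightarrow> s \<le> a * \<delta> + b * (q / \<delta>)" and a: "0 < a" and q: "0 \<le> q"
  shows "s \<le> (a + b) * sqrt q"
proof (cases "q = 0")
  case True
  have "s \<le> 0 + e" if "0 < e" for e
    using le[of "e / a"] that a True by simp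
  then show ?thesis using True by (simp add: field_le_epsilon)
next
  case False
  then have "0 < sqrt q" using q by simp
  from le[OF this] show ?thesis
    using q by (simp add: real_div_sqrt distrib_right)
qed

lemma int_mult_pi_interval_cover:
  fixes u :: real
  assumes "-2 * pi < u" "u \<le> 2 * pi"
  shows "\<exists>k::int\<in>{-2..2}. of_int k * pi \<le> u \<and> u \<le> of_int k * pi + pi"
proof
  define k where "k = \<lfloor>u / pi\<rfloor>"
  have k: "of_int k \<le> u / pi" "u / pi < of_int k + 1"
    unfolding k_def by linarith+
  then show "of_int k * pi \<le> u \<and> u \<le> of_int k * pi + pi"
    by (simp add: pos_le_divide_eq pos_divide_less_eq algebra_simps)
  have "(-2 * pi) / pi < u / pi" "u / pi \<le> (2 * pi) / pi"
    using assms by (intro divide_strict_right_mono divide_right_mono; simp)+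
  then show "k \<in> {-2..2}"
    using k by simp
qed

lemma measure_le_if_shifted_cos_image_subset:
  fixes S B :: "real set" and c e \<psi> \<delta> :: real
  assumes S: "S \<in> sets lebesgue" "S \<subseteq> {0..2*pi}" and \<psi>: "0 \<le> \<psi>" "\<psi> < 2*pi"
    and c: "0 < c" and \<delta>: "0 < \<delta>"
    and img: "(\<lambda>\<theta>. e + c * cos (\<theta> - \<psi>)) ` S \<subseteq> B" and B: "B \<in> lmeasurable"
  shows "measure lebesgue S \<le> 20 * \<delta> + 5 * (measure lebesgue B / c / \<delta>)"
proof -
  define T where "T = {\<theta>\<in>{0..2*pi}. \<bar>sin (\<theta> - \<psi>)\<bar> < \<delta>}"
  define P where "P k = S \<inter> {\<psi> + of_int k * pi .. \<psi> + of_int k * pi + pi} \<inter> {\<theta>. \<delta> \<le> \<bar>sin (\<theta> - \<psi>)\<bar>}"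
    for k :: int
  have T: "T \<in> sets lebesgue"
    unfolding T_def by (rule abs_sin_less_in_sets)
  have P: "P k \<in> sets lebesgue" for k
  proof -
    have "closed {\<theta>::real. \<delta> \<le> \<bar>sin (\<theta> - \<psi>)\<bar>}"
      by (intro closed_Collect_le continuous_intros)
    then show ?thesis
      unfolding P_def using S by (intro sets.Int) (auto simp: borel_closed)
  qed
  have P_le: "measure lebesgue (P k) \<le> measure lebesgue B / c / \<delta>" for k
  proof -
    have "c * \<delta> * measure lebesgue (P k) \<le> measure lebesgue B"
      using img by (intro measure_le_measure_image_shifted_cos[OF c P _ _ _ B]) (auto simp: P_def)
    then show ?thesis using c \<delta> by (simp add: field_simps)
  qed
  have cover: "S \<subseteq> T \<union> (\<Union>k\<in>{-2..2}. P k)"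
  proof
    fix \<theta> assume \<theta>: "\<theta> \<in> S"
    have "-2 * pi < \<theta> - \<psi>" "\<theta> - \<psi> \<le> 2 * pi"
      using \<theta> S(2) \<psi> by auto
    then obtain k where "k \<in> {-2..2}"
      and k_le: "of_int k * pi \<le> \<theta> - \<psi>" and k_gt: "\<theta> - \<psi> \<le> of_int k * pi + pi"
      using int_mult_pi_interval_cover by blast
    show "\<theta> \<in> T \<union> (\<Union>k\<in>{-2..2}. P k)"
    proof (cases "\<bar>sin (\<theta> - \<psi>)\<bar> < \<delta>")
      case True
      then have "\<theta> \<in> T" using \<theta> S(2) by (auto simp: T_def)
      then show ?thesis by blast
    next
      case False
      then have "\<theta> \<in> P k" using \<theta> k_le k_gt by (simp add: P_def)
      with \<open>k \<in> {-2..2}\<close> show ?thesis by blast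
    qed
  qed
  have U: "(\<Union>k\<in>{-2..2}. P k) \<in> sets lebesgue"
    using P by auto
  have TU_sub: "T \<union> (\<Union>k\<in>{-2..2}. P k) \<subseteq> {0..2*pi}"
    using S(2) by (auto simp: T_def P_def)
  have "T \<union> (\<Union>k\<in>{-2..2}. P k) \<in> lmeasurable"
    by (rule fmeasurableI2[OF _ TU_sub sets.Un[OF T U]]) simp
  then have "measure lebesgue S \<le> measure lebesgue (T \<union> (\<Union>k\<in>{-2..2}. P k))"
    by (rule measure_mono_fmeasurable[OF cover S(1)])
  also have "\<dots> \<le> measure lebesgue T + measure lebesgue (\<Union>k\<in>{-2..2}. P k)"
    by (rule measure_Un_le[OF T U])
  also have "\<dots> \<le> 20 * \<delta> + (\<Sum>k\<in>{-2..2::int}. measure lebesgue (P k))"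
  proof (rule add_mono)
    show "measure lebesgue T \<le> 20 * \<delta>"
      unfolding T_def by (rule measure_abs_sin_less_le[OF \<psi> \<delta>])
    show "measure lebesgue (\<Union>k\<in>{-2..2}. P k) \<le> (\<Sum>k\<in>{-2..2::int}. measure lebesgue (P k))"
      by (rule measure_UNION_le) (use P in auto)
  qed
  also have "\<dots> \<le> 20 * \<delta> + 5 * (measure lebesgue B / c / \<delta>)"
    using sum_mono[of "{-2..2::int}", OF P_le] by simp
  finally show ?thesis .
qed

lemma measure_le_sqrt_if_shifted_cos_image_subset:
  fixes S B :: "real set" and c e \<psi> :: real
  assumes S: "S \<in> sets lebesgue" "S \<subseteq> {0..2*pi}" and \<psi>: "0 \<le> \<psi>" "\<psi> < 2*pi" and c: "0 < c"
    and img: "(\<lambda>\<theta>. e + c * cos (\<theta> - \<psi>)) ` S \<subseteq> B" and B: "B \<in> lmeasurable"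
  shows "measure lebesgue S \<le> 25 * sqrt (measure lebesgue B / c)"
proof -
  have "measure lebesgue S \<le> (20 + 5) * sqrt (measure lebesgue B / c)"
    using measure_le_if_shifted_cos_image_subset[OF S \<psi> c _ img B] c
    by (intro le_sqrt_if_le_linear_plus_inverse) auto
  then show ?thesis by simp
qed

lemma set_integral_mult_indicator_eq_integral:
  fixes A :: "real set"
  assumes A: "A \<in> sets lebesgue"
  shows "(\<lambda>z. z) absolutely_integrable_on A \<inter> {a..b}"
    and "(LINT z:{a..b}|lebesgue. z * indicator A z) = integral (A \<inter> {a..b}) (\<lambda>z. z)"
proof -
  have "(\<lambda>z::real. z) absolutely_integrable_on {a..b}"
    by (intro absolutely_integrable_continuous_real continuous_intros)
  then show int: "(\<lambda>z. z) absolutely_integrable_on A \<inter> {a..b}"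
    by (rule set_integrable_subset) (use A in auto)
  have "(LINT z:{a..b}|lebesgue. z * indicator A z) = (LINT z:A \<inter> {a..b}|lebesgue. z)"
    unfolding set_lebesgue_integral_def
    by (intro Bochner_Integration.integral_cong) (auto simp: indicator_def)
  also have "\<dots> = integral (A \<inter> {a..b}) (\<lambda>z. z)"
    using int by (rule set_lebesgue_integral_eq_integral(2))
  finally show "(LINT z:{a..b}|lebesgue. z * indicator A z) = integral (A \<inter> {a..b}) (\<lambda>z. z)" .
qed

lemma set_integral_mult_indicator_eq_measure_image:
  fixes A :: "real set"
  assumes A: "A \<in> sets lebesgue" and a: "0 \<le> a"
  shows "(\<lambda>z. z\<^sup>2/2) ` (A \<inter> {a..b}) \<in> lmeasurable"
    and "(LINT z:{a..b}|lebesgue. z * indicator A z) = measure lebesgue ((\<lambda>z. z\<^sup>2/2) ` (A \<inter> {a..b}))"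
proof -
  define D where "D = A \<inter> {a..b}"
  have D: "D \<in> sets lebesgue" unfolding D_def using A by auto
  have der: "((\<lambda>z. z\<^sup>2/2) has_field_derivative z) (at z within D)" for z
    by (auto intro!: derivative_eq_intros)
  have inj: "inj_on (\<lambda>z::real. z\<^sup>2/2) D"
    using a by (intro inj_onI) (auto simp: D_def power2_eq_iff)
  have abs_eq: "\<bar>z\<bar> = z" if "z \<in> D" for z
    using that a by (auto simp: D_def)
  have int_id: "(\<lambda>z. z) absolutely_integrable_on D"
    unfolding D_def by (rule set_integral_mult_indicator_eq_integral(1)[OF A])
  then have int: "(\<lambda>z::real. \<bar>z\<bar>) absolutely_integrable_on D"
    using set_integrable_abs by (simp add: absolutely_integrable_on_def)
  show "(\<lambda>z. z\<^sup>2/2) ` (A \<inter> {a..b}) \<in> lmeasurable"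
    using measure_image_eq_integral_abs_deriv(1)[OF D der inj int] by (simp add: D_def)
  have "(LINT z:{a..b}|lebesgue. z * indicator A z) = integral D (\<lambda>z. \<bar>z\<bar>)"
    unfolding set_integral_mult_indicator_eq_integral(2)[OF A] D_def[symmetric]
    using abs_eq by (intro integral_cong) auto
  also have "\<dots> = measure lebesgue ((\<lambda>z. z\<^sup>2/2) ` D)"
    using measure_image_eq_integral_abs_deriv(2)[OF D der inj int] by simp
  finally show "(LINT z:{a..b}|lebesgue. z * indicator A z) = measure lebesgue ((\<lambda>z. z\<^sup>2/2) ` (A \<inter> {a..b}))"
    unfolding D_def .
qed

lemma set_integral_mult_indicator_nonneg:
  fixes A :: "real set"
  assumes "A \<in> sets lebesgue" "0 \<le> a"
  shows "0 \<le> (LINT z:{a..b}|lebesgue. z * indicator A z)"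
  using set_integral_mult_indicator_eq_measure_image(2)[OF assms] by simp

lemma set_integral_mult_indicator_le:
  fixes A :: "real set"
  assumes A: "A \<in> sets lebesgue"
  shows "(LINT z:{a..b}|lebesgue. z * indicator A z) \<le> b * measure lebesgue (A \<inter> {a..b})"
proof -
  define D where "D = A \<inter> {a..b}"
  have D: "D \<in> lmeasurable"
    unfolding D_def using A by (intro fmeasurableI2[of "{a..b}", OF _ _ sets.Int]) auto
  have int: "(\<lambda>z. z) absolutely_integrable_on D"
    unfolding D_def by (rule set_integral_mult_indicator_eq_integral(1)[OF A])
  have "(LINT z:{a..b}|lebesgue. z * indicator A z) = integral D (\<lambda>z. z)"
    unfolding D_def by (rule set_integral_mult_indicator_eq_integral(2)[OF A])
  also have "\<dots> \<le> integral D (\<lambda>_. b)"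
  proof (rule integral_le)
    show "(\<lambda>z. z) integrable_on D"
      using int set_lebesgue_integral_eq_integral(1) by blast
    show "(\<lambda>_. b) integrable_on D"
      using D by (rule integrable_on_const)
  qed (auto simp: D_def)
  also have "\<dots> = b * measure lebesgue D"
    using lmeasure_integral[OF D] integral_mult_right[of D b "\<lambda>_. 1::real"] by simp
  finally show ?thesis unfolding D_def .
qed

lemma set_integral_indicator_eq_measure:
  fixes A :: "real set"
  assumes "A \<in> sets lebesgue"
  shows "(LINT z:{a..b}|lebesgue. indicator A z) = measure lebesgue (A \<inter> {a..b})"
proof -
  have "(\<lambda>z. indicator {a..b} z *\<^sub>R indicator A z) = (indicator (A \<inter> {a..b}) :: real \<Rightarrow> real)"
    by (auto simp: indicator_def)
  then show ?thesis
    using assms unfolding set_lebesgue_integral_def by simp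
qed

lemma measure_Int_interval_le:
  fixes A :: "real set"
  assumes "A \<in> sets lebesgue" "a \<le> b"
  shows "measure lebesgue (A \<inter> {a..b}) \<le> b - a"
proof -
  have "measure lebesgue (A \<inter> {a..b}) \<le> measure lebesgue {a..b}"
    using assms(1) by (intro measure_mono_fmeasurable) auto
  then show ?thesis using assms(2) by simp
qed

lemma norm_diff_scaleR_cos_sin_sq:
  fixes r t \<psi> \<theta> :: real
  shows "(norm ((- (r * cos \<psi>), - (r * sin \<psi>)) - t *\<^sub>R (cos \<theta>, sin \<theta>)))\<^sup>2
    = r\<^sup>2 + t\<^sup>2 + 2 * r * t * cos (\<theta> - \<psi>)"
proof -
  have "(norm ((- (r * cos \<psi>), - (r * sin \<psi>)) - t *\<^sub>R (cos \<theta>, sin \<theta>)))\<^sup>2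
      = (- (r * cos \<psi>) - t * cos \<theta>)\<^sup>2 + (- (r * sin \<psi>) - t * sin \<theta>)\<^sup>2"
    by (simp add: norm_Pair)
  also have "\<dots> = r\<^sup>2 + t\<^sup>2 + 2 * r * t * cos (\<theta> - \<psi>)"
  proof -
    have "cos \<psi> * cos \<psi> + sin \<psi> * sin \<psi> = 1" "cos \<theta> * cos \<theta> + sin \<theta> * sin \<theta> = 1"
      by simp_all
    then show ?thesis unfolding cos_diff power2_eq_square by algebra
  qed
  finally show ?thesis .
qed

lemma neg_polar_coordinates:
  fixes x :: "real \<times> real"
  assumes "x \<noteq> 0"
  obtains \<psi> where "0 \<le> \<psi>" "\<psi> < 2*pi" "x = (- (norm x * cos \<psi>), - (norm x * sin \<psi>))"
proof -
  have r: "0 < norm x" using assms by simp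
  have norm_sq: "(fst x)\<^sup>2 + (snd x)\<^sup>2 = (norm x)\<^sup>2"
    by (cases x) (simp add: norm_Pair)
  have "(- fst x / norm x)\<^sup>2 + (- snd x / norm x)\<^sup>2 = ((fst x)\<^sup>2 + (snd x)\<^sup>2) / (norm x)\<^sup>2"
    by (simp add: power_divide add_divide_distrib)
  also have "\<dots> = 1"
    using r by (simp add: norm_sq)
  finally obtain \<psi> where \<psi>: "0 \<le> \<psi>" "\<psi> < 2*pi"
    and "- fst x / norm x = cos \<psi>" "- snd x / norm x = sin \<psi>"
    by (rule sincos_total_2pi)
  then have "x = (- (norm x * cos \<psi>), - (norm x * sin \<psi>))"
    using r by (auto simp: field_simps prod_eq_iff)
  with \<psi> show ?thesis by (rule that)
qed

lemma circle_avg_indicator_radial: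
  "circle_avg (indicator {y. norm y \<in> A}) x t
    = measure lebesgue {\<theta>\<in>{0..2*pi}. norm (x - t *\<^sub>R (cos \<theta>, sin \<theta>)) \<in> A} / (2*pi)"
proof -
  have "(\<lambda>\<theta>. indicator {0..2*pi} \<theta> *\<^sub>R indicator {y. norm y \<in> A} (x - t *\<^sub>R (cos \<theta>, sin \<theta>)))
      = (indicator {\<theta>\<in>{0..2*pi}. norm (x - t *\<^sub>R (cos \<theta>, sin \<theta>)) \<in> A} :: real \<Rightarrow> real)"
    by (auto simp: indicator_def)
  then show ?thesis unfolding circle_avg_def set_lebesgue_integral_def by simp
qed

lemma measure_circle_in_radial_set_le:
  fixes A :: "real set" and x :: "real \<times> real" and t :: real
  assumes A: "A \<in> sets lebesgue" and x: "x \<noteq> 0" and t: "0 < t"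
  shows "measure lebesgue {\<theta>\<in>{0..2*pi}. norm (x - t *\<^sub>R (cos \<theta>, sin \<theta>)) \<in> A}
    \<le> 25 * sqrt ((LINT z:{\<bar>norm x - t\<bar>..norm x + t}|lebesgue. z * indicator A z) / (norm x * t))"
proof -
  define r where "r = norm x"
  define S where "S = {\<theta>\<in>{0..2*pi}. norm (x - t *\<^sub>R (cos \<theta>, sin \<theta>)) \<in> A}"
  define B where "B = (\<lambda>z. z\<^sup>2/2) ` (A \<inter> {\<bar>r - t\<bar>..r + t})"
  have r: "0 < r" using x by (simp add: r_def)
  have B: "B \<in> lmeasurable"
    unfolding B_def by (rule set_integral_mult_indicator_eq_measure_image(1)[OF A]) simp
  have LINT_eq: "(LINT z:{\<bar>r - t\<bar>..r + t}|lebesgue. z * indicator A z) = measure lebesgue B"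
    unfolding B_def by (rule set_integral_mult_indicator_eq_measure_image(2)[OF A]) simp
  obtain \<psi> where \<psi>: "0 \<le> \<psi>" "\<psi> < 2*pi" and x_eq: "x = (- (r * cos \<psi>), - (r * sin \<psi>))"
    using neg_polar_coordinates[OF x] unfolding r_def by blast
  have "(\<lambda>\<theta>. (r\<^sup>2 + t\<^sup>2)/2 + (r * t) * cos (\<theta> - \<psi>)) ` S \<subseteq> B"
  proof
    fix u assume "u \<in> (\<lambda>\<theta>. (r\<^sup>2 + t\<^sup>2)/2 + (r * t) * cos (\<theta> - \<psi>)) ` S"
    then obtain \<theta> where \<theta>: "\<theta> \<in> S" and u: "u = (r\<^sup>2 + t\<^sup>2)/2 + (r * t) * cos (\<theta> - \<psi>)"
      by blast
    define n where "n = norm (x - t *\<^sub>R (cos \<theta>, sin \<theta>))"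
    have t_eq: "norm (t *\<^sub>R (cos \<theta>, sin \<theta>)) = t"
      using t by (simp add: norm_Pair power_mult_distrib flip: distrib_left)
    have "n \<in> A" using \<theta> by (simp add: S_def n_def)
    moreover have "\<bar>r - t\<bar> \<le> n" "n \<le> r + t"
      using norm_triangle_ineq3[of x "t *\<^sub>R (cos \<theta>, sin \<theta>)"]
        norm_triangle_ineq4[of x "t *\<^sub>R (cos \<theta>, sin \<theta>)"]
      unfolding n_def r_def t_eq by simp_all
    moreover have "u = n\<^sup>2/2"
      unfolding u n_def x_eq norm_diff_scaleR_cos_sin_sq by (simp add: field_simps)
    ultimately show "u \<in> B" unfolding B_def by auto
  qed
  then have "S \<in> sets lebesgue \<Longrightarrow> measure lebesgue S \<le> 25 * sqrt (measure lebesgue B / (r * t))"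
    using r t \<psi>(1,2) B by (intro measure_le_sqrt_if_shifted_cos_image_subset) (auto simp: S_def)
  \<comment> \<open>\<open>S\<close>, a continuous preimage of a Lebesgue set, may be non-measurable; then its measure is 0.\<close>
  then show ?thesis
    unfolding S_def[symmetric] r_def[symmetric] LINT_eq
    using r t by (cases "S \<in> sets lebesgue") (simp_all add: measure_notin_sets zero_le_divide_iff)
qed

lemma abs_circle_avg_radial_le:
  fixes A :: "real set" and x :: "real \<times> real" and t :: real
  assumes A: "A \<in> sets lebesgue" and x: "x \<noteq> 0" and t: "1 \<le> t"
  shows "\<bar>circle_avg (indicator {y. norm y \<in> A}) x t\<bar>
    \<le> 5 * sqrt ((1 / norm x) * (LINT z:{\<bar>norm x - t\<bar>..norm x + t}|lebesgue. z * indicator A z))"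
proof -
  define L where "L = (LINT z:{\<bar>norm x - t\<bar>..norm x + t}|lebesgue. z * indicator A z)"
  have L: "0 \<le> L"
    unfolding L_def by (rule set_integral_mult_indicator_nonneg[OF A]) simp
  have "\<bar>circle_avg (indicator {y. norm y \<in> A}) x t\<bar>
      = measure lebesgue {\<theta>\<in>{0..2*pi}. norm (x - t *\<^sub>R (cos \<theta>, sin \<theta>)) \<in> A} / (2*pi)"
    by (simp add: circle_avg_indicator_radial)
  also have "\<dots> \<le> 25 * sqrt (L / (norm x * t)) / (2*pi)"
    using measure_circle_in_radial_set_le[OF A x] t
    by (intro divide_right_mono) (auto simp: L_def)
  also have "\<dots> \<le> 25 * sqrt (L / norm x) / 6"
  proof (rule frac_le)
    have "L / (norm x * t) \<le> L / norm x"
      using L t x by (intro divide_left_mono) auto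
    then show "25 * sqrt (L / (norm x * t)) \<le> 25 * sqrt (L / norm x)"
      by simp
    show "0 \<le> 25 * sqrt (L / norm x)"
      using L by simp
  qed (use pi_gt3 in auto)
  also have "\<dots> \<le> 5 * sqrt ((1 / norm x) * L)"
    using L by simp
  finally show ?thesis unfolding L_def .
qed

lemma le_opU_indicator:
  fixes A :: "real set"
  assumes A: "A \<in> sets lebesgue" and r: "1/2 < r" and t: "1 \<le> t" "t \<le> 2" "t < 2 * r"
  shows "(1 / r) * (LINT z:{\<bar>r - t\<bar>..r + t}|lebesgue. z * indicator A z) \<le> opU (indicator A) r"
proof -
  define f where "f s = (1 / r) * (LINT z:{\<bar>r - s\<bar>..r + s}|lebesgue. z * indicator A z)" for s
  have "f s \<le> (1 / r) * ((r + 2) * 4)" if s: "1 \<le> s" "s \<le> 2" for s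
  proof -
    have "(LINT z:{\<bar>r - s\<bar>..r + s}|lebesgue. z * indicator A z)
        \<le> (r + s) * measure lebesgue (A \<inter> {\<bar>r - s\<bar>..r + s})"
      by (rule set_integral_mult_indicator_le[OF A])
    also have "\<dots> \<le> (r + 2) * 4"
      using measure_Int_interval_le[OF A, of "\<bar>r - s\<bar>" "r + s"] r s
      by (intro mult_mono) (auto simp: abs_if)
    finally show ?thesis
      unfolding f_def using r by (intro mult_left_mono) auto
  qed
  then have "bdd_above (f ` {s. 1 \<le> s \<and> s \<le> 2 \<and> s < 2 * r})"
    by (intro bdd_aboveI2) auto
  then have "f t \<le> (SUP s\<in>{s. 1 \<le> s \<and> s \<le> 2 \<and> s < 2 * r}. f s)"
    using t by (intro cSUP_upper) auto
  then show ?thesis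
    using r by (simp add: opU_def f_def)
qed

lemma le_opR_indicator:
  fixes A :: "real set"
  assumes A: "A \<in> sets lebesgue" and r: "0 < r" "r \<le> 1" and t: "1 \<le> t" "t \<le> 2" "2 * r \<le> t"
  shows "(1 / r) * (LINT z:{t - r..t + r}|lebesgue. indicator A z) \<le> opR (indicator A) r"
proof -
  define f where "f s = (1 / r) * (LINT z:{s - r..s + r}|lebesgue. indicator A z)" for s
  have "f s \<le> (1 / r) * (2 * r)" for s
    unfolding f_def set_integral_indicator_eq_measure[OF A]
    using measure_Int_interval_le[OF A, of "s - r" "s + r"] r by (intro mult_left_mono) auto
  then have "bdd_above (f ` {s. 1 \<le> s \<and> s \<le> 2 \<and> 2 * r \<le> s})"
    by (intro bdd_aboveI2) auto
  then have "f t \<le> (SUP s\<in>{s. 1 \<le> s \<and> s \<le> 2 \<and> 2 * r \<le> s}. f s)"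
    using t by (intro cSUP_upper) auto
  then show ?thesis
    using r by (simp add: opR_def f_def)
qed

lemma opU_indicator_nonneg:
  fixes A :: "real set"
  assumes A: "A \<in> sets lebesgue"
  shows "0 \<le> opU (indicator A) r"
proof (cases "1/2 < r")
  case True
  then have "0 \<le> (1 / r) * (LINT z:{\<bar>r - 1\<bar>..r + 1}|lebesgue. z * indicator A z)"
    using set_integral_mult_indicator_nonneg[OF A] by simp
  also have "\<dots> \<le> opU (indicator A) r"
    using True by (intro le_opU_indicator[OF A]) auto
  finally show ?thesis .
qed (simp add: opU_def)

lemma opR_indicator_nonneg:
  fixes A :: "real set"
  assumes A: "A \<in> sets lebesgue" and r: "0 < r"
  shows "0 \<le> opR (indicator A) r"
proof (cases "r \<le> 1")
  case True
  then have "0 \<le> (1 / r) * (LINT z:{2 - r..2 + r}|lebesgue. indicator A z)"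
    using r by (simp add: set_integral_indicator_eq_measure[OF A])
  also have "\<dots> \<le> opR (indicator A) r"
    using True r by (intro le_opR_indicator[OF A]) auto
  finally show ?thesis .
qed (simp add: opR_def)

lemma abs_circle_avg_radial_le_opU_opR:
  fixes A :: "real set" and x :: "real \<times> real" and t :: real
  assumes A: "A \<in> sets lebesgue" and x: "x \<noteq> 0" and t: "1 \<le> t" "t \<le> 2"
  shows "\<bar>circle_avg (indicator {y. norm y \<in> A}) x t\<bar>
    \<le> 10 * (sqrt (opU (indicator A) (norm x)) + sqrt (opR (indicator A) (norm x)))"
proof -
  define r where "r = norm x"
  define U where "U = (1 / r) * (LINT z:{\<bar>r - t\<bar>..r + t}|lebesgue. z * indicator A z)"
  have r: "0 < r" using x by (simp add: r_def)
  have U_nonneg: "0 \<le> sqrt (opU (indicator A) r)" and R_nonneg: "0 \<le> sqrt (opR (indicator A) r)"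
    using opU_indicator_nonneg[OF A] opR_indicator_nonneg[OF A r] by simp_all
  have avg: "\<bar>circle_avg (indicator {y. norm y \<in> A}) x t\<bar> \<le> 5 * sqrt U"
    using abs_circle_avg_radial_le[OF A x t(1)] by (simp add: U_def r_def)
  show ?thesis
  proof (cases "t < 2 * r")
    case True
    then have "U \<le> opU (indicator A) r"
      unfolding U_def using t by (intro le_opU_indicator[OF A]) auto
    then have "sqrt U \<le> sqrt (opU (indicator A) r)"
      by simp
    then show ?thesis
      using avg R_nonneg unfolding r_def[symmetric] distrib_left by linarith
  next
    case False
    then have "\<bar>r - t\<bar> = t - r" using r by simp
    then have "U = (1 / r) * (LINT z:{t - r..t + r}|lebesgue. z * indicator A z)"
      unfolding U_def by (simp add: add.commute)
    also have "\<dots> \<le> (1 / r) * ((t + r) * measure lebesgue (A \<inter> {t - r..t + r}))"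
      using r False by (intro mult_left_mono set_integral_mult_indicator_le[OF A]) auto
    also have "\<dots> = (t + r) * ((1 / r) * (LINT z:{t - r..t + r}|lebesgue. indicator A z))"
      by (simp add: set_integral_indicator_eq_measure[OF A])
    also have "\<dots> \<le> 4 * ((1 / r) * (LINT z:{t - r..t + r}|lebesgue. indicator A z))"
      using r t False by (intro mult_right_mono) (auto simp: set_integral_indicator_eq_measure[OF A])
    also have "\<dots> \<le> 4 * opR (indicator A) r"
      using r t False by (intro mult_left_mono le_opR_indicator[OF A]) auto
    finally have "sqrt U \<le> 2 * sqrt (opR (indicator A) r)"
      using real_sqrt_le_mono by (fastforce simp: real_sqrt_mult)
    then show ?thesis
      using avg U_nonneg unfolding r_def[symmetric] distrib_left by linarith
  qed
qed

theorem lemma3p1: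
  shows "\<exists>C::real. \<forall>At::real set. At \<in> sets lebesgue \<longrightarrow> At \<subseteq> {0..} \<longrightarrow>
     (\<forall>x::real \<times> real. x \<noteq> 0 \<longrightarrow>
        M12 (indicator {y. norm y \<in> At}) x
          \<le> C * (sqrt (opU (indicator At) (norm x)) + sqrt (opR (indicator At) (norm x))))"
proof (intro exI[of _ 10] allI impI)
  fix At :: "real set" and x :: "real \<times> real"
  assume A: "At \<in> sets lebesgue" and "At \<subseteq> {0..}" and x: "x \<noteq> 0"
  show "M12 (indicator {y. norm y \<in> At}) x
      \<le> 10 * (sqrt (opU (indicator At) (norm x)) + sqrt (opR (indicator At) (norm x)))"
    unfolding M12_def
  proof (rule cSUP_least)
    fix t :: real assume "t \<in> {1..2}"
    then show "\<bar>circle_avg (indicator {y. norm y \<in> At}) x t\<bar>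
        \<le> 10 * (sqrt (opU (indicator At) (norm x)) + sqrt (opR (indicator At) (norm x)))"
      by (intro abs_circle_avg_radial_le_opU_opR[OF A x]) auto
  qed simp
qed

end
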